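(* Let $p$ be an odd prime and let $G$ be the non-abelian group of order $p^3$ and exponent $p$. Let $U = g_1 \cdot \dotsc \cdot g_m$ be a sequence over $G$ of length $m \geq p+1$ that has central product. If $U$ contains an EGZ subsequence, then there exists a permutation $\sigma$ of $\{1,\dots,m\}$ such that $g_{\sigma(1)} g_{\sigma(2)} \cdots g_{\sigma(m)} = 1$. In particular, every EGZ sequence over $G$ contains a non-empty product-one subsequence.
   Context: $G = \langle x, y : x^p = y^p = 1,\ [y,x] \text{ central}\rangle$ is the Heisenberg group of order $p^3$ and exponent $p$; here $Z(G) = [G,G]$ has order $p$. A sequence over $G$ is a finite unordered list (multiset) $g_1 \cdot \dotsc \cdot g_\ell$ of elements of $G$; its length is $\ell$; a subsequence is a sub-multiset. A non-empty sequence $T$ is product-one if, for some ordering of its terms, the product equals $1$. A sequence $T = g_1\cdot\dotsc\cdot g_\ell$ has central product if $g_1 g_2\cdots g_\ell \in Z(G)$ (since $[G,G]=Z(G)$, this does not depend on the ordering). A sequence $T$ over $G$ is an EGZ sequence if $T$ has central product and $T$ contains a subsequence consisting of $p$ terms which can be labelled $h_1,\dots,h_{p-1},h_p$ so that $h_p$ does not commute with the product $h_\alpha h_{\alpha+1}\cdots h_\beta$ for any $1 \le \alpha \le \beta \le p-1$. *)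

theory Defs
  imports "HOL-Algebra.Algebra" "HOL-Library.Multiset"
begin

definition center :: "('a, 'b) monoid_scheme \<Rightarrow> 'a set" where
  "center G = {z \<in> carrier G. \<forall>x \<in> carrier G. z \<otimes>\<^bsub>G\<^esub> x = x \<otimes>\<^bsub>G\<^esub> z}"

definition lprod :: "('a, 'b) monoid_scheme \<Rightarrow> 'a list \<Rightarrow> 'a" where
  "lprod G xs = foldr (\<lambda>x y. x \<otimes>\<^bsub>G\<^esub> y) xs \<one>\<^bsub>G\<^esub>"

text \<open>A sequence over G is a multiset of elements of the carrier.
  It has central product if the product (in any, hence every, order) lies in the center.\<close>
definition central_product :: "('a, 'b) monoid_scheme \<Rightarrow> 'a multiset \<Rightarrow> bool" where
  "central_product G T \<longleftrightarrow> (\<exists>xs. mset xs = T \<and> lprod G xs \<in> center G)"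

definition product_one :: "('a, 'b) monoid_scheme \<Rightarrow> 'a multiset \<Rightarrow> bool" where
  "product_one G T \<longleftrightarrow> T \<noteq> {#} \<and> (\<exists>xs. mset xs = T \<and> lprod G xs = \<one>\<^bsub>G\<^esub>)"

text \<open>EGZ sequence: central product, and a subsequence of p terms h_1..h_p
  (list hs, h_p = hs ! (p-1)) such that h_p does not commute with
  h_\<alpha> ... h_\<beta> for any 1 \<le> \<alpha> \<le> \<beta> \<le> p-1 (0-based: a \<le> b < p-1).\<close>
definition EGZ :: "('a, 'b) monoid_scheme \<Rightarrow> nat \<Rightarrow> 'a multiset \<Rightarrow> bool" where
  "EGZ G p T \<longleftrightarrow> central_product G T \<and>
     (\<exists>hs. length hs = p \<and> mset hs \<subseteq># T \<and>
        (\<forall>a b. a \<le> b \<and> b < p - 1 \<longrightarrow>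
           (let w = lprod G (take (b - a + 1) (drop a hs)) in
              hs ! (p - 1) \<otimes>\<^bsub>G\<^esub> w \<noteq> w \<otimes>\<^bsub>G\<^esub> hs ! (p - 1))))"

end

theory Submission
  imports Defs "HOL-Computational_Algebra.Primes" "HOL-Combinatorics.Permutations"
begin

text \<open>In a non-abelian group of order \<open>p\<^sup>3\<close> the class equation gives \<open>|Z(G)| = p\<close>, and
  \<open>G/Z(G)\<close>, of order \<open>p\<^sup>2\<close>, is abelian; so all commutators are central and reordering a
  sequence changes its product only by a central factor. Given the EGZ terms \<open>h\<^sub>1, \<dots>, h\<^sub>p\<close>
  of \<open>U\<close>, list the remaining terms first, followed by \<open>h\<^sub>1 \<cdots> h\<^sub>p\<^sub>-\<^sub>1\<close> with \<open>h\<^sub>p\<close>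
  inserted into one of its \<open>p\<close> gaps. All \<open>p\<close> products lie in \<open>Z(G)\<close>, and two of them
  coincide only if \<open>h\<^sub>p\<close> commutes with a block \<open>h\<^sub>\<alpha> \<cdots> h\<^sub>\<beta>\<close>, which the EGZ condition
  forbids. Hence they run through all of \<open>Z(G)\<close>, and one of them is \<open>1\<close>.\<close>

lemma (in group_action) card_fixed_points_cong:
  assumes fin: "finite (carrier G)" "finite E"
    and p: "Factorial_Ring.prime p" and ord: "order G = p ^ n"
  shows "card {x \<in> E. \<forall>g \<in> carrier G. \<phi> g x = x} mod p = card E mod p"
proof -
  interpret group G
    using group_hom group_hom.axioms(1) by blast
  define F where "F = {x \<in> E. \<forall>g \<in> carrier G. \<phi> g x = x}"
  have orbit_cong: "(\<Sum>y\<in>orb. of_bool (y \<in> F)) mod p = card orb mod p"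
    if orb: "orb \<in> orbits G E \<phi>" for orb :: "'c set"
  proof -
    obtain x where x: "x \<in> E" "orb = orbit G \<phi> x"
      using orb unfolding orbits_def by blast
    show ?thesis
    proof (cases "x \<in> F")
      case True
      then have "orb = {x}"
        using x orbit_refl[of x] by (auto simp: F_def orbit_def)
      with True show ?thesis by simp
    next
      case False
      then obtain g where g: "g \<in> carrier G" "\<phi> g x \<noteq> x"
        using x(1) by (auto simp: F_def)
      have "y \<notin> F" if "y \<in> orb" for y
      proof
        assume y: "y \<in> F"
        obtain h where h: "h \<in> carrier G" "y = \<phi> h x"
          using \<open>y \<in> orb\<close> x(2) by (auto simp: orbit_def)
        have "\<phi> (inv h) y = x"
          using orbit_sym_aux[OF h(1) x(1)] h(2) by simp
        moreover have "\<phi> (inv h) y = y"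
          using y h(1) by (simp add: F_def)
        ultimately show False
          using y False by simp
      qed
      then have "(\<Sum>y\<in>orb. of_bool (y \<in> F)) = (0::nat)"
        by simp
      moreover have "card orb \<noteq> 1"
      proof
        assume "card orb = 1"
        moreover have "x \<in> orb" "\<phi> g x \<in> orb"
          using x g(1) orbit_refl by (auto simp: orbit_def)
        ultimately show False
          using g(2) by (metis card_1_singletonE singletonD)
      qed
      moreover have "card orb dvd p ^ n"
        using orbit_stabilizer_theorem[OF x(1)] x(2) ord by (metis dvd_triv_left)
      then obtain i where "card orb = p ^ i"
        using divides_primepow_nat[OF p] by blast
      ultimately show ?thesis
        by (cases i) auto
    qed
  qed
  have "card F = (\<Sum>x\<in>E. of_bool (x \<in> F))"
    using fin(2) by (simp add: F_def Int_def)
  also have "\<dots> = (\<Sum>orb\<in>orbits G E \<phi>. \<Sum>x\<in>orb. of_bool (x \<in> F))"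
    by (rule disjoint_sum[OF fin(2), symmetric])
  finally have "card F mod p =
      (\<Sum>orb\<in>orbits G E \<phi>. (\<Sum>x\<in>orb. of_bool (x \<in> F)) mod p) mod p"
    by (simp add: mod_sum_eq)
  also have "\<dots> = (\<Sum>orb\<in>orbits G E \<phi>. card orb mod p) mod p"
    using orbit_cong by (simp cong: sum.cong)
  also have "\<dots> = (\<Sum>orb\<in>orbits G E \<phi>. card orb) mod p"
    by (simp add: mod_sum_eq)
  also have "(\<Sum>orb\<in>orbits G E \<phi>. card orb) = card E"
    using disjoint_sum[OF fin(2), of "\<lambda>_. 1::nat"] by simp
  finally show ?thesis
    by (simp add: F_def)
qed

lemma center_subset_carrier: "center G \<subseteq> carrier G"
  by (auto simp: center_def)

lemma center_commute: "z \<in> center G \<Longrightarrow> x \<in> carrier G \<Longrightarrow> z \<otimes>\<^bsub>G\<^esub> x = x \<otimes>\<^bsub>G\<^esub> z"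
  by (simp add: center_def)

context group
begin

definition centralizer :: "'a \<Rightarrow> 'a set"
  where "centralizer x = {g \<in> carrier G. g \<otimes> x = x \<otimes> g}"

lemma conjugation_fixed_iff:
  "g \<in> carrier G \<Longrightarrow> x \<in> carrier G \<Longrightarrow> g \<otimes> x \<otimes> inv g = x \<longleftrightarrow> g \<otimes> x = x \<otimes> g"
  by (simp add: inv_solve_right')

lemma centralizer_eq_stabilizer:
  "x \<in> carrier G \<Longrightarrow>
     centralizer x = stabilizer G (\<lambda>g. \<lambda>h \<in> carrier G. g \<otimes> h \<otimes> inv g) x"
  unfolding centralizer_def stabilizer_def
  by (intro Collect_cong conj_cong refl) (simp add: conjugation_fixed_iff)

lemma centralizer_subgroup: "x \<in> carrier G \<Longrightarrow> subgroup (centralizer x) G"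
  using group_action.stabilizer_subgroup[OF action_by_conjugation]
  by (simp add: centralizer_eq_stabilizer)

lemma center_eq_Inter_centralizer: "center G = (\<Inter>x \<in> carrier G. centralizer x)"
  by (auto simp: center_def centralizer_def)

lemma center_eq_conjugation_fixed:
  "center G = {x \<in> carrier G. \<forall>g \<in> carrier G. (\<lambda>h \<in> carrier G. g \<otimes> h \<otimes> inv g) x = x}"
  by (auto simp: center_def conjugation_fixed_iff)

lemma center_subgroup: "subgroup (center G) G"
  unfolding center_eq_Inter_centralizer
  by (rule subgroups_Inter) (auto simp: centralizer_subgroup)

lemma center_normal: "center G \<lhd> G"
proof -
  have "x \<otimes> z \<otimes> inv x \<in> center G" if x: "x \<in> carrier G" and z: "z \<in> center G" for x z
  proof -
    have "z \<in> carrier G" "z \<otimes> x = x \<otimes> z"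
      using x z by (auto simp: center_def)
    then have "x \<otimes> z \<otimes> inv x = z"
      using x by (simp add: conjugation_fixed_iff)
    with z show ?thesis by simp
  qed
  then show ?thesis
    using center_subgroup by (simp add: normal_inv_iff)
qed

lemma card_subgroup_prime_power:
  assumes "subgroup H G" "Factorial_Ring.prime p" "order G = p ^ n"
  shows "\<exists>i \<le> n. card H = p ^ i"
proof -
  have "card H dvd p ^ n"
    using lagrange[OF assms(1)] assms(3) by (metis dvd_triv_right)
  then show ?thesis
    using divides_primepow_nat[OF assms(2)] by blast
qed

lemma subgroup_eq_carrier_if_card:
  "finite (carrier G) \<Longrightarrow> subgroup H G \<Longrightarrow> card H = order G \<Longrightarrow> H = carrier G"
  using card_subset_eq subgroup.subset by (metis order_def)

lemma p_dvd_card_center: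
  assumes "finite (carrier G)" "Factorial_Ring.prime p" "order G = p ^ n" "0 < n"
  shows "p dvd card (center G)"
  using group_action.card_fixed_points_cong[OF action_by_conjugation assms(1,1-3)] assms(3,4)
  by (simp add: center_eq_conjugation_fixed order_def mod_eq_0_iff_dvd)

lemma card_center_ne_1:
  assumes "finite (carrier G)" "Factorial_Ring.prime p" "order G = p ^ n" "0 < n"
  shows "card (center G) \<noteq> 1"
  using p_dvd_card_center[OF assms] assms(2) by auto

lemma card_center_ne_pred_power:
  assumes fin: "finite (carrier G)" and p: "Factorial_Ring.prime p"
    and ord: "order G = p ^ n" and n: "0 < n"
  shows "card (center G) \<noteq> p ^ (n - 1)"
proof
  assume card_center: "card (center G) = p ^ (n - 1)"
  have "p ^ (n - 1) < p ^ n"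
    using prime_gt_1_nat[OF p] n by simp
  have "center G \<noteq> carrier G"
  proof
    assume "center G = carrier G"
    then have "p ^ (n - 1) = p ^ n"
      using card_center ord by (simp add: order_def)
    with \<open>p ^ (n - 1) < p ^ n\<close> show False
      by simp
  qed
  then obtain x where x: "x \<in> carrier G" "x \<notin> center G"
    using center_subset_carrier[of G] by blast
  have "finite (center G)"
    by (rule rev_finite_subset[OF fin center_subset_carrier])
  have "insert x (center G) \<subseteq> centralizer x"
    using x by (auto simp: center_def centralizer_def)
  moreover have "finite (centralizer x)"
    using fin by (rule rev_finite_subset) (simp add: centralizer_def)
  ultimately have "card (insert x (center G)) \<le> card (centralizer x)"
    by (rule card_mono[rotated])
  then have "card (center G) < card (centralizer x)"
    using x(2) \<open>finite (center G)\<close> by simp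
  moreover obtain i where i: "i \<le> n" "card (centralizer x) = p ^ i"
    using card_subgroup_prime_power[OF centralizer_subgroup[OF x(1)] p ord] by blast
  ultimately have "p ^ (n - 1) < p ^ i"
    using card_center by simp
  then have "n - 1 < i"
    by (rule power_less_imp_less_exp[OF prime_gt_1_nat[OF p]])
  then have "i = n"
    using i(1) by linarith
  then have "card (centralizer x) = order G"
    using i ord by simp
  then have "centralizer x = carrier G"
    using subgroup_eq_carrier_if_card[OF fin centralizer_subgroup[OF x(1)]] by blast
  then have "g \<in> centralizer x" if "g \<in> carrier G" for g
    using that by simp
  then have "x \<otimes> g = g \<otimes> x" if "g \<in> carrier G" for g
    using that by (simp add: centralizer_def)
  then show False
    using x by (simp add: center_def)
qed

lemma center_eq_carrier_if_order_prime_square: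
  assumes fin: "finite (carrier G)" and p: "Factorial_Ring.prime p" and ord: "order G = p ^ 2"
  shows "center G = carrier G"
proof -
  obtain i where i: "i \<le> 2" "card (center G) = p ^ i"
    using card_subgroup_prime_power[OF center_subgroup p ord] by blast
  have "i \<noteq> 0"
    using card_center_ne_1[OF fin p ord] i by auto
  moreover have "i \<noteq> 1"
    using card_center_ne_pred_power[OF fin p ord] i by auto
  ultimately have "i = 2"
    using i(1) by linarith
  then have "card (center G) = order G"
    using i ord by simp
  then show ?thesis
    using subgroup_eq_carrier_if_card[OF fin center_subgroup] by blast
qed

lemma card_center_if_order_prime_cube:
  assumes fin: "finite (carrier G)" and p: "Factorial_Ring.prime p" and ord: "order G = p ^ 3"
    and nonabelian: "center G \<noteq> carrier G"
  shows "card (center G) = p"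
proof -
  obtain i where i: "i \<le> 3" "card (center G) = p ^ i"
    using card_subgroup_prime_power[OF center_subgroup p ord] by blast
  have "i \<noteq> 0"
    using card_center_ne_1[OF fin p ord] i by auto
  moreover have "i \<noteq> 2"
    using card_center_ne_pred_power[OF fin p ord] i by auto
  moreover have "i \<noteq> 3"
    using subgroup_eq_carrier_if_card[OF fin center_subgroup] nonabelian ord i by auto
  ultimately have "i = 1"
    using i(1) by linarith
  then show ?thesis
    using i by simp
qed

lemma commute_mod_center_if_order_prime_cube:
  assumes fin: "finite (carrier G)" and p: "Factorial_Ring.prime p" and ord: "order G = p ^ 3"
    and nonabelian: "center G \<noteq> carrier G"
    and x: "x \<in> carrier G" and y: "y \<in> carrier G"
  shows "\<exists>z \<in> center G. x \<otimes> y = z \<otimes> (y \<otimes> x)"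
proof -
  interpret Z: normal "center G" G
    by (rule center_normal)
  define Q where "Q = G Mod center G"
  have Q: "group Q"
    unfolding Q_def by (rule Z.factorgroup_is_group)
  have carrier_Q: "carrier Q = rcosets (center G)"
    by (simp add: Q_def FactGroup_def)
  have fin_Q: "finite (carrier Q)"
    using fin by (simp add: carrier_Q RCOSETS_def)
  have "card (rcosets (center G)) * p = p ^ 3"
    using lagrange[OF center_subgroup] card_center_if_order_prime_cube[OF fin p ord nonabelian] ord
    by simp
  then have "order Q = p ^ 2"
    using prime_gt_0_nat[OF p] by (simp add: order_def carrier_Q numeral_eq_Suc)
  then have center_Q: "center Q = carrier Q"
    by (rule group.center_eq_carrier_if_order_prime_square[OF Q fin_Q p])
  have "center G #> x \<in> carrier Q" "center G #> y \<in> carrier Q"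
    using x y by (auto simp: carrier_Q RCOSETS_def)
  then have "(center G #> x) <#> (center G #> y) = (center G #> y) <#> (center G #> x)"
    using center_commute[of "center G #> x" Q "center G #> y"] center_Q
    by (simp add: Q_def FactGroup_def)
  then have "center G #> (x \<otimes> y) = center G #> (y \<otimes> x)"
    using x y by (simp add: Z.rcos_sum)
  moreover have "x \<otimes> y \<in> center G #> (x \<otimes> y)"
    using x y by (simp add: rcos_self Z.subgroup_axioms)
  ultimately obtain z where "z \<in> center G" "x \<otimes> y = z \<otimes> (y \<otimes> x)"
    unfolding r_coset_def by auto
  then show ?thesis by blast
qed

lemma center_lcomm:
  assumes z: "z \<in> center G" and x: "x \<in> carrier G" and y: "y \<in> carrier G"
  shows "x \<otimes> (z \<otimes> y) = z \<otimes> (x \<otimes> y)"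
proof -
  have "z \<in> carrier G"
    using z by (simp add: center_def)
  then have "x \<otimes> (z \<otimes> y) = (z \<otimes> x) \<otimes> y"
    using center_commute[OF z x] x y by (simp add: m_assoc)
  also have "\<dots> = z \<otimes> (x \<otimes> y)"
    using \<open>z \<in> carrier G\<close> x y by (simp add: m_assoc)
  finally show ?thesis .
qed

lemma lprod_Nil [simp]: "lprod G [] = \<one>"
  by (simp add: lprod_def)

lemma lprod_Cons [simp]: "lprod G (x # xs) = x \<otimes> lprod G xs"
  by (simp add: lprod_def)

lemma lprod_closed [simp]: "set xs \<subseteq> carrier G \<Longrightarrow> lprod G xs \<in> carrier G"
  by (induct xs) auto

lemma lprod_append:
  "set xs \<subseteq> carrier G \<Longrightarrow> set ys \<subseteq> carrier G \<Longrightarrow>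
    lprod G (xs @ ys) = lprod G xs \<otimes> lprod G ys"
  by (induct xs) (auto simp: m_assoc)

lemma lprod_insert_eq_imp_commute:
  assumes xs: "set xs \<subseteq> carrier G" and h: "h \<in> carrier G"
    and kl: "k < l" "l \<le> length xs"
    and eq: "lprod G (take k xs @ h # drop k xs) = lprod G (take l xs @ h # drop l xs)"
  shows "h \<otimes> lprod G (take (l - k) (drop k xs)) = lprod G (take (l - k) (drop k xs)) \<otimes> h"
proof -
  define as bs cs where "as = take k xs" and "bs = take (l - k) (drop k xs)" and "cs = drop l xs"
  have carrier: "set as \<subseteq> carrier G" "set bs \<subseteq> carrier G" "set cs \<subseteq> carrier G"
    using xs by (auto simp: as_def bs_def cs_def dest: in_set_takeD in_set_dropD)
  have "take k xs = as" "drop l xs = cs"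
    by (simp_all add: as_def cs_def)
  moreover have "take l xs = as @ bs"
    using take_add[of k "l - k" xs] kl by (simp add: as_def bs_def)
  moreover have "drop k xs = bs @ cs"
    using append_take_drop_id[of "l - k" "drop k xs"] kl by (simp add: bs_def cs_def)
  ultimately have "lprod G (as @ h # bs @ cs) = lprod G (as @ bs @ h # cs)"
    using eq by simp
  then have "h \<otimes> lprod G bs \<otimes> lprod G cs = lprod G bs \<otimes> h \<otimes> lprod G cs"
    using carrier h by (simp add: lprod_append m_assoc l_cancel)
  then show ?thesis
    unfolding bs_def[symmetric] using carrier h by (simp add: r_cancel)
qed

end

locale central_commutators = group +
  assumes commutator_in_center:
    "x \<in> carrier G \<Longrightarrow> y \<in> carrier G \<Longrightarrow> \<exists>z \<in> center G. x \<otimes> y = z \<otimes> (y \<otimes> x)"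
begin

lemma lprod_mset_eq:
  "mset ys = mset xs \<Longrightarrow> set xs \<subseteq> carrier G \<Longrightarrow> \<exists>z \<in> center G. lprod G ys = z \<otimes> lprod G xs"
proof (induct xs arbitrary: ys)
  case Nil
  then show ?case
    using subgroup.one_closed[OF center_subgroup] by force
next
  case (Cons x xs)
  have "x \<in> set ys"
    using Cons.prems(1) by (metis list.set_intros(1) mset_eq_setD)
  then obtain us vs where ys: "ys = us @ x # vs"
    by (meson split_list)
  have x: "x \<in> carrier G" and xs: "set xs \<subseteq> carrier G"
    using Cons.prems(2) by auto
  have "set ys \<subseteq> carrier G"
    using Cons.prems mset_eq_setD by (metis set_mset_mset)
  then have us: "set us \<subseteq> carrier G" and vs: "set vs \<subseteq> carrier G"
    using ys by auto
  obtain z1 where z1: "z1 \<in> center G" "lprod G us \<otimes> lprod G vs = z1 \<otimes> lprod G xs"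
    using Cons.hyps[of "us @ vs"] Cons.prems(1) xs us vs ys by (auto simp: lprod_append)
  obtain z2 where z2: "z2 \<in> center G" "lprod G us \<otimes> x = z2 \<otimes> (x \<otimes> lprod G us)"
    using commutator_in_center[OF lprod_closed[OF us] x] by blast
  have z: "z1 \<in> carrier G" "z2 \<in> carrier G"
    using z1(1) z2(1) by (auto simp: center_def)
  have "lprod G ys = (lprod G us \<otimes> x) \<otimes> lprod G vs"
    using ys us vs x by (simp add: lprod_append m_assoc)
  also have "\<dots> = z2 \<otimes> (x \<otimes> (z1 \<otimes> lprod G xs))"
    using z1(2) z2(2) us vs x z by (simp add: m_assoc)
  also have "\<dots> = (z2 \<otimes> z1) \<otimes> lprod G (x # xs)"
    using center_lcomm[OF z1(1) x] x xs z by (simp add: m_assoc)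
  finally show ?case
    using subgroup.m_closed[OF center_subgroup z2(1) z1(1)] by blast
qed

lemma lprod_mset_eq_in_center:
  assumes "mset ys = mset xs" "set xs \<subseteq> carrier G" "lprod G xs \<in> center G"
  shows "lprod G ys \<in> center G"
  using lprod_mset_eq[OF assms(1,2)] subgroup.m_closed[OF center_subgroup] assms(3) by force

lemma exists_reordering_lprod_one:
  assumes fin: "finite (carrier G)" and card_center: "card (center G) = Suc (length xs)"
    and L: "set L \<subseteq> carrier G" "lprod G L \<in> center G"
    and sub: "mset (xs @ [h]) \<subseteq># mset L"
    and noncomm: "\<And>k l. k < l \<Longrightarrow> l \<le> length xs \<Longrightarrow>
      h \<otimes> lprod G (take (l - k) (drop k xs)) \<noteq> lprod G (take (l - k) (drop k xs)) \<otimes> h"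
  shows "\<exists>W. mset W = mset L \<and> lprod G W = \<one>"
proof -
  obtain R where R: "mset R = mset L - mset (xs @ [h])"
    using ex_mset by blast
  define W where "W k = R @ take k xs @ h # drop k xs" for k
  have mset_W: "mset (W k) = mset L" for k
  proof -
    have "mset (W k) = mset R + mset (xs @ [h])"
      using mset_append[of "take k xs" "drop k xs"] by (simp add: W_def)
    also have "\<dots> = mset L"
      unfolding R using sub by (rule subset_mset.diff_add)
    finally show ?thesis .
  qed
  have W_carrier: "set (W k) \<subseteq> carrier G" for k
    using mset_eq_setD[OF mset_W] L(1) by metis
  from W_carrier[of 0] have R: "set R \<subseteq> carrier G" and xs: "set xs \<subseteq> carrier G"
    and h: "h \<in> carrier G"
    by (auto simp: W_def)
  have "inj_on (\<lambda>k. lprod G (W k)) {0..length xs}"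
  proof (rule linorder_inj_onI')
    fix k l assume "k \<in> {0..length xs}" "l \<in> {0..length xs}" "k < l"
    show "lprod G (W k) \<noteq> lprod G (W l)"
    proof
      assume "lprod G (W k) = lprod G (W l)"
      then have "lprod G (take k xs @ h # drop k xs) = lprod G (take l xs @ h # drop l xs)"
        using R W_carrier[of k] W_carrier[of l] by (simp add: W_def lprod_append l_cancel)
      then show False
        using lprod_insert_eq_imp_commute[OF xs h] noncomm \<open>k < l\<close> \<open>l \<in> {0..length xs}\<close>
        by auto
    qed
  qed
  moreover have "(\<lambda>k. lprod G (W k)) ` {0..length xs} \<subseteq> center G"
    using lprod_mset_eq_in_center[OF mset_W _ L(2)] L(1) by auto
  moreover have "finite (center G)"
    by (rule rev_finite_subset[OF fin center_subset_carrier])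
  ultimately have "(\<lambda>k. lprod G (W k)) ` {0..length xs} = center G"
    using card_center by (simp add: card_subset_eq card_image)
  then obtain k where "lprod G (W k) = \<one>"
    using subgroup.one_closed[OF center_subgroup] by (metis imageE)
  then show ?thesis
    using mset_W by blast
qed

lemma EGZ_imp_exists_reordering_lprod_one:
  assumes fin: "finite (carrier G)" and card_center: "card (center G) = p"
    and L: "set L \<subseteq> carrier G" "lprod G L \<in> center G"
    and T: "T \<subseteq># mset L" "EGZ G p T"
  shows "\<exists>W. mset W = mset L \<and> lprod G W = \<one>"
proof -
  obtain hs where hs: "length hs = p" "mset hs \<subseteq># T"
    and noncomm: "\<And>a b. a \<le> b \<Longrightarrow> b < p - 1 \<Longrightarrow>
      hs ! (p - 1) \<otimes> lprod G (take (b - a + 1) (drop a hs)) \<noteq>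
      lprod G (take (b - a + 1) (drop a hs)) \<otimes> hs ! (p - 1)"
    using T(2) unfolding EGZ_def Let_def by blast
  have "finite (center G)"
    by (rule rev_finite_subset[OF fin center_subset_carrier])
  then have "0 < p"
    using card_center subgroup.one_closed[OF center_subgroup] card_gt_0_iff by blast
  define xs where "xs = take (p - 1) hs"
  have "take (Suc (p - 1)) hs = xs @ [hs ! (p - 1)]"
    using hs(1) \<open>0 < p\<close> unfolding xs_def by (intro take_Suc_conv_app_nth) simp
  then have hs_eq: "hs = xs @ [hs ! (p - 1)]"
    using hs(1) \<open>0 < p\<close> by simp
  have length_xs: "length xs = p - 1"
    using hs(1) by (simp add: xs_def)
  show ?thesis
  proof (rule exists_reordering_lprod_one[OF fin _ L])
    show "card (center G) = Suc (length xs)"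
      using card_center length_xs \<open>0 < p\<close> by simp
    show "mset (xs @ [hs ! (p - 1)]) \<subseteq># mset L"
      using hs(2) T(1) hs_eq by (metis subset_mset.order_trans)
  next
    fix k l assume kl: "k < l" "l \<le> length xs"
    have "l - 1 - k + 1 = l - k"
      using kl by linarith
    have "take (l - k) (drop k xs) = take (l - k) (drop k hs)"
      using kl length_xs by (simp add: xs_def drop_take min_def)
    then show "hs ! (p - 1) \<otimes> lprod G (take (l - k) (drop k xs)) \<noteq>
        lprod G (take (l - k) (drop k xs)) \<otimes> hs ! (p - 1)"
      using noncomm[of k "l - 1", unfolded \<open>l - 1 - k + 1 = l - k\<close>] kl length_xs by simp
  qed
qed

end

theorem theorem1p3:
  fixes G :: "('a, 'b) monoid_scheme" and p :: nat
  assumes "group G"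
    and "Factorial_Ring.prime p" and "odd p"
    and "finite (carrier G)" and "order G = p ^ 3"
    and "\<forall>x \<in> carrier G. x [^]\<^bsub>G\<^esub> p = \<one>\<^bsub>G\<^esub>"
    and "\<exists>x \<in> carrier G. \<exists>y \<in> carrier G. x \<otimes>\<^bsub>G\<^esub> y \<noteq> y \<otimes>\<^bsub>G\<^esub> x"
  shows "(\<forall>g :: nat \<Rightarrow> 'a. \<forall>m.
            (\<forall>i < m. g i \<in> carrier G) \<longrightarrow> m \<ge> p + 1 \<longrightarrow>
            lprod G (map g [0..<m]) \<in> center G \<longrightarrow>
            (\<exists>T. T \<subseteq># mset (map g [0..<m]) \<and> EGZ G p T) \<longrightarrow>
            (\<exists>\<sigma>. \<sigma> permutes {0..<m} \<and> lprod G (map (g \<circ> \<sigma>) [0..<m]) = \<one>\<^bsub>G\<^esub>))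
       \<and> (\<forall>T. set_mset T \<subseteq> carrier G \<longrightarrow> EGZ G p T \<longrightarrow>
            (\<exists>S. S \<subseteq># T \<and> product_one G S))"
proof -
  interpret group G
    by (rule assms(1))
  have nonabelian: "center G \<noteq> carrier G"
    using assms(7) by (auto simp: center_def)
  interpret central_commutators G
    by unfold_locales (rule commute_mod_center_if_order_prime_cube[OF assms(4,2,5) nonabelian])
  have card_center: "card (center G) = p"
    by (rule card_center_if_order_prime_cube[OF assms(4,2,5) nonabelian])
  note reordering = EGZ_imp_exists_reordering_lprod_one[OF assms(4) card_center]
  have "\<exists>\<sigma>. \<sigma> permutes {0..<m} \<and> lprod G (map (g \<circ> \<sigma>) [0..<m]) = \<one>\<^bsub>G\<^esub>"
    if U: "\<forall>i < m. g i \<in> carrier G" "lprod G (map g [0..<m]) \<in> center G"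
      "T \<subseteq># mset (map g [0..<m])" "EGZ G p T" for g m T
  proof -
    have "set (map g [0..<m]) \<subseteq> carrier G"
      using U(1) by auto
    then obtain W where W: "mset W = mset (map g [0..<m])" "lprod G W = \<one>\<^bsub>G\<^esub>"
      using reordering U(2-4) by blast
    obtain \<sigma> where \<sigma>: "\<sigma> permutes {0..<m}" "permute_list \<sigma> (map g [0..<m]) = W"
      using mset_eq_permutation[OF W(1)] by (auto simp: lessThan_atLeast0)
    have "permute_list \<sigma> (map g [0..<m]) = map (g \<circ> \<sigma>) [0..<m]"
      using permutes_in_image[OF \<sigma>(1)] by (auto simp: permute_list_def)
    then show ?thesis
      using \<sigma> W(2) by auto
  qed
  moreover have "\<exists>S. S \<subseteq># T \<and> product_one G S"
    if T: "set_mset T \<subseteq> carrier G" "EGZ G p T" for T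
  proof -
    obtain xs where xs: "mset xs = T" "lprod G xs \<in> center G"
      using T(2) unfolding EGZ_def central_product_def by blast
    obtain W where "mset W = T" "lprod G W = \<one>\<^bsub>G\<^esub>"
      using reordering[of xs T] xs T by auto
    moreover obtain hs where "length hs = p" "mset hs \<subseteq># T"
      using T(2) unfolding EGZ_def by blast
    then have "T \<noteq> {#}"
      using prime_gt_0_nat[OF assms(2)] by auto
    ultimately show ?thesis
      unfolding product_one_def by blast
  qed
  ultimately show ?thesis
    by blast
qed

end
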